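(* Consider the sequences $(x_k),(y_k),(\nu_k),(\lambda_k)$ generated by Algorithm 2 (described in the context). Then for all $k\ge1$, $$\|y_k-y_{k-1}\|\le\frac{1}{1-\hat\sigma}\big\|\lambda_k\big(F(y_{k-1})+\nu_{k-1}\big)+y_{k-1}-x_{k-1}\big\|.$$
   Context: Setting: $\mathcal H$ real Hilbert space; $C\subseteq\mathcal H$ nonempty closed convex; $N_C(x)=\{\nu:\langle\nu,y-x\rangle\le0\ \forall y\in C\}$ if $x\in C$, $N_C(x)=\emptyset$ otherwise. $F:C\to\mathcal H$ is monotone, continuously differentiable, and $\|F'(x)-F'(y)\|\le L\|x-y\|$ for all $x,y\in C$, with $L>0$; the set of $x$ with $0\in F(x)+N_C(x)$ is nonempty. For $y\in C$, $F_y(x):=F(y)+F'(y)(x-y)$. Parameters: $0\le\hat\sigma<1/2$; $0<\theta<(1-\hat\sigma)(1-2\hat\sigma)$; $\hat\theta:=\theta\big(\frac{\hat\sigma}{1-\hat\sigma}+\frac{\theta}{(1-\hat\sigma)^2}\big)$; $\eta>2\hat\theta/L$; $\tau:=\dfrac{2(\theta-\hat\theta)}{2\theta+\frac{\eta L}{2}+\sqrt{(2\theta+\frac{\eta L}{2})^2-4\theta(\theta-\hat\theta)}}$. Algorithm 2: input $x_0\in C$, $y_0:=x_0$, $\nu_0:=0$, $\lambda_1>0$ with $\lambda_1^2\|F(y_0)\|\le2\theta/L$. For $k=1,2,\dots$: if $F(y_{k-1})+\nu_{k-1}=0$, stop and return $y_{k-1}$. If $\frac{\lambda_kL}{2}\|\lambda_k(F(y_{k-1})+\nu_{k-1})+y_{k-1}-x_{k-1}\|\le\hat\theta$,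 set $y_k=y_{k-1}$, $\nu_k=\nu_{k-1}$; otherwise find any $(y_k,\nu_k)$ with $\nu_k\in N_C(y_k)$ and $\|\lambda_k(F_{y_{k-1}}(y_k)+\nu_k)+y_k-x_{k-1}\|\le\hat\sigma\|y_k-y_{k-1}\|$. Then, if $\lambda_k\|y_k-x_{k-1}\|\ge\eta$, set $x_k=x_{k-1}-\tau\lambda_k(F(y_k)+\nu_k)$ and $\lambda_{k+1}=(1-\tau)\lambda_k$; else set $x_k=x_{k-1}$ and $\lambda_{k+1}=\lambda_k/(1-\tau)$. Standing assumption: the algorithm never stops at the first test, i.e. $F(y_{k-1})+\nu_{k-1}\neq0$ for all $k$. *)

theory Defs
  imports "HOL-Analysis.Analysis"
begin

definition normal_cone :: "'a::real_inner set \<Rightarrow> 'a \<Rightarrow> 'a set" where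
  "normal_cone C x = (if x \<in> C then {v. \<forall>y\<in>C. inner v (y - x) \<le> 0} else {})"

definition linearization :: "('a::real_normed_vector \<Rightarrow> 'a) \<Rightarrow> ('a \<Rightarrow> 'a \<Rightarrow>\<^sub>L 'a) \<Rightarrow> 'a \<Rightarrow> 'a \<Rightarrow> 'a" where
  "linearization F F' y x = F y + blinfun_apply (F' y) (x - y)"

definition hat_theta :: "real \<Rightarrow> real \<Rightarrow> real" where
  "hat_theta sig th = th * (sig / (1 - sig) + th / (1 - sig)\<^sup>2)"

definition tau_param :: "real \<Rightarrow> real \<Rightarrow> real \<Rightarrow> real \<Rightarrow> real" where
  "tau_param sig th eta L =
     2 * (th - hat_theta sig th) /
     (2 * th + eta * L / 2 + sqrt ((2 * th + eta * L / 2)\<^sup>2 - 4 * th * (th - hat_theta sig th)))"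

text \<open>The sequences x, y, nu, lam are generated by Algorithm 2 (step k+1 uses index k for k-1).\<close>
definition alg2_run ::
  "'a::real_inner set \<Rightarrow> ('a \<Rightarrow> 'a) \<Rightarrow> ('a \<Rightarrow> 'a \<Rightarrow>\<^sub>L 'a) \<Rightarrow> real \<Rightarrow> real \<Rightarrow> real \<Rightarrow> real
    \<Rightarrow> (nat \<Rightarrow> 'a) \<Rightarrow> (nat \<Rightarrow> 'a) \<Rightarrow> (nat \<Rightarrow> 'a) \<Rightarrow> (nat \<Rightarrow> real) \<Rightarrow> bool" where
  "alg2_run C F F' L sig th eta x y nu lam \<longleftrightarrow>
     x 0 \<in> C \<and> y 0 = x 0 \<and> nu 0 = 0 \<and> lam 1 > 0 \<and>
     (lam 1)\<^sup>2 * norm (F (y 0)) \<le> 2 * th / L \<and>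
     (\<forall>k. F (y k) + nu k \<noteq> 0) \<and>
     (\<forall>k. (if lam (Suc k) * L / 2 * norm (lam (Suc k) *\<^sub>R (F (y k) + nu k) + y k - x k)
               \<le> hat_theta sig th
           then y (Suc k) = y k \<and> nu (Suc k) = nu k
           else nu (Suc k) \<in> normal_cone C (y (Suc k)) \<and>
                norm (lam (Suc k) *\<^sub>R (linearization F F' (y k) (y (Suc k)) + nu (Suc k))
                      + y (Suc k) - x k) \<le> sig * norm (y (Suc k) - y k))) \<and>
     (\<forall>k. (if lam (Suc k) * norm (y (Suc k) - x k) \<ge> eta
           then x (Suc k) = x k - (tau_param sig th eta L * lam (Suc k)) *\<^sub>R (F (y (Suc k)) + nu (Suc k))
                \<and> lam (Suc (Suc k)) = (1 - tau_param sig th eta L) * lam (Suc k)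
           else x (Suc k) = x k
                \<and> lam (Suc (Suc k)) = lam (Suc k) / (1 - tau_param sig th eta L)))"

end

theory Submission
  imports Defs
begin

text \<open>
  Write \<open>d = y\<^sub>k - y\<^sub>k\<^sub>-\<^sub>1\<close>, let \<open>r\<close> be the residual on the right-hand side and \<open>e\<close> the residual
  of the inexact Newton step defining \<open>y\<^sub>k\<close>. Then \<open>e - r = \<lambda>\<^sub>k F'(y\<^sub>k\<^sub>-\<^sub>1) d + \<lambda>\<^sub>k (\<nu>\<^sub>k - \<nu>\<^sub>k\<^sub>-\<^sub>1) + d\<close>.
  Monotonicity of \<open>F\<close> makes \<open>F'(y\<^sub>k\<^sub>-\<^sub>1)\<close> positive semidefinite along \<open>d\<close>, and monotonicity of the
  normal cone gives \<open>\<langle>\<nu>\<^sub>k - \<nu>\<^sub>k\<^sub>-\<^sub>1, d\<rangle> \<ge> 0\<close>; hence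
  \<open>\<parallel>d\<parallel>\<^sup>2 \<le> \<langle>e - r, d\<rangle> \<le> (\<sigma>\<parallel>d\<parallel> + \<parallel>r\<parallel>) \<parallel>d\<parallel>\<close>. When the algorithm skips the Newton step, \<open>d = 0\<close>.
\<close>

lemma normal_cone_in_set: "v \<in> normal_cone C x \<Longrightarrow> x \<in> C"
  by (simp add: normal_cone_def split: if_splits)

lemma normal_cone_inner_nonpos: "v \<in> normal_cone C x \<Longrightarrow> y \<in> C \<Longrightarrow> inner v (y - x) \<le> 0"
  by (simp add: normal_cone_def split: if_splits)

lemma zero_in_normal_cone: "x \<in> C \<Longrightarrow> 0 \<in> normal_cone C x"
  by (simp add: normal_cone_def)

lemma normal_cone_monotone:
  assumes "v \<in> normal_cone C x" "w \<in> normal_cone C z"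
  shows "0 \<le> inner (v - w) (x - z)"
proof -
  have "inner v (z - x) \<le> 0" "inner w (x - z) \<le> 0"
    using assms normal_cone_in_set normal_cone_inner_nonpos by blast+
  moreover have "inner (v - w) (x - z) = - inner v (z - x) - inner w (x - z)"
    by (simp add: inner_diff_left inner_diff_right)
  ultimately show ?thesis
    by linarith
qed

lemma monotone_has_derivative_inner_nonneg:
  fixes F :: "'a::real_inner \<Rightarrow> 'a"
  assumes "convex C" "y \<in> C" "z \<in> C"
    and mono: "\<forall>u\<in>C. \<forall>v\<in>C. inner (F u - F v) (u - v) \<ge> 0"
    and der: "(F has_derivative D) (at y within C)"
  shows "inner (D (z - y)) (z - y) \<ge> 0"
proof (rule ccontr)
  define h where "h = z - y"
  define seg where "seg = (\<lambda>t::real. y + t *\<^sub>R h)"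
  assume "\<not> ?thesis"
  then have neg: "inner (D h) h < 0"
    by (simp add: h_def)
  have seg_C: "seg t \<in> C" if "0 \<le> t" "t \<le> 1" for t
  proof -
    have "(1 - t) *\<^sub>R y + t *\<^sub>R z \<in> C"
      using assms(1-3) that by (simp add: convexD_alt)
    then show ?thesis
      by (simp add: seg_def h_def algebra_simps)
  qed
  have "((F \<circ> seg) has_derivative (D \<circ> (\<lambda>s. s *\<^sub>R h))) (at 0 within {0..1})"
  proof (rule diff_chain_within)
    show "(seg has_derivative (\<lambda>s. s *\<^sub>R h)) (at 0 within {0..1})"
      unfolding seg_def by (auto intro!: derivative_eq_intros)
    have "seg ` {0..1} \<subseteq> C"
      using seg_C by auto
    then show "(F has_derivative D) (at (seg 0) within seg ` {0..1})"
      using has_derivative_subset[OF der] by (simp add: seg_def)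
  qed
  then have "((\<lambda>t. inner (F (seg t)) h) has_derivative (\<lambda>s. inner (D (s *\<^sub>R h)) h))
      (at 0 within {0..1})"
    using bounded_linear.has_derivative[OF bounded_linear_inner_left] by (simp add: o_def)
  moreover have "(\<lambda>s. inner (D (s *\<^sub>R h)) h) = (\<lambda>s. inner (D h) h * s)"
    using has_derivative_bounded_linear[OF der] by (simp add: linear_simps mult.commute)
  ultimately have "((\<lambda>t. inner (F (seg t)) h) has_real_derivative inner (D h) h) (at 0 within {0..1})"
    by (simp add: has_field_derivative_def)
  from has_real_derivative_neg_dec_right[OF this neg] obtain d where "d > 0"
    and dec: "\<And>t. 0 < t \<Longrightarrow> t \<in> {0..1} \<Longrightarrow> t < d \<Longrightarrow> inner (F (seg t)) h < inner (F (seg 0)) h"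
    by auto
  define t where "t = min (d/2) 1"
  have t: "0 < t" "t \<le> 1" "t < d"
    using \<open>d > 0\<close> by (auto simp: t_def)
  have "0 \<le> inner (F (seg t) - F y) (seg t - y)"
    using mono seg_C[of t] t \<open>y \<in> C\<close> by simp
  also have "\<dots> = t * inner (F (seg t) - F (seg 0)) h"
    by (simp add: seg_def)
  finally have "inner (F (seg 0)) h \<le> inner (F (seg t)) h"
    using t by (simp add: zero_le_mult_iff inner_diff_left)
  with dec[of t] t show False
    by simp
qed

lemma norm_le_of_inner_coercive:
  fixes d e r :: "'a::real_inner"
  assumes coercive: "norm d ^ 2 \<le> inner (e - r) d"
    and e: "norm e \<le> sig * norm d" and "sig < 1"
  shows "norm d \<le> 1 / (1 - sig) * norm r"
proof -
  have "norm d * norm d \<le> norm (e - r) * norm d"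
    using coercive norm_cauchy_schwarz[of "e - r" d] by (simp add: power2_eq_square)
  also have "\<dots> \<le> (sig * norm d + norm r) * norm d"
    using e norm_triangle_ineq4[of e r] by (intro mult_right_mono) auto
  finally have "norm d \<le> sig * norm d + norm r"
    by (cases "norm d = 0") (auto simp: mult_le_cancel_right)
  then show ?thesis
    using \<open>sig < 1\<close> by (simp add: field_simps)
qed

lemma inexact_newton_step_norm_le:
  fixes F :: "'a::real_inner \<Rightarrow> 'a"
  assumes "convex C"
    and mono: "\<forall>u\<in>C. \<forall>v\<in>C. inner (F u - F v) (u - v) \<ge> 0"
    and der: "(F has_derivative blinfun_apply (F' y)) (at y within C)"
    and cone: "nu \<in> normal_cone C y" and cone': "nu' \<in> normal_cone C y'"
    and "0 \<le> lam" "sig < 1"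
    and step: "norm (lam *\<^sub>R (linearization F F' y y' + nu') + y' - x) \<le> sig * norm (y' - y)"
  shows "norm (y' - y) \<le> 1 / (1 - sig) * norm (lam *\<^sub>R (F y + nu) + y - x)"
proof (rule norm_le_of_inner_coercive[OF _ step \<open>sig < 1\<close>])
  define d where "d = y' - y"
  define e where "e = lam *\<^sub>R (linearization F F' y y' + nu') + y' - x"
  define r where "r = lam *\<^sub>R (F y + nu) + y - x"
  have "y \<in> C" "y' \<in> C"
    using cone cone' by (meson normal_cone_in_set)+
  then have psd: "0 \<le> inner (F' y d) d"
    unfolding d_def by (rule monotone_has_derivative_inner_nonneg[OF \<open>convex C\<close> _ _ mono der])
  have cone_mono: "0 \<le> inner (nu' - nu) d"
    unfolding d_def by (rule normal_cone_monotone[OF cone' cone])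
  have "e - r = lam *\<^sub>R F' y d + lam *\<^sub>R (nu' - nu) + d"
    unfolding d_def e_def r_def linearization_def by (simp add: algebra_simps)
  then have "inner (e - r) d = lam * inner (F' y d) d + lam * inner (nu' - nu) d + norm d ^ 2"
    by (simp add: inner_add_left power2_norm_eq_inner)
  moreover have "0 \<le> lam * inner (F' y d) d + lam * inner (nu' - nu) d"
    using psd cone_mono \<open>0 \<le> lam\<close> by simp
  ultimately have "norm d ^ 2 \<le> inner (e - r) d"
    by linarith
  then show "norm (y' - y) ^ 2 \<le> inner (e - r) (y' - y)"
    by (simp add: d_def)
qed

lemma hat_theta_nonneg:
  assumes "0 \<le> sig" "sig < 1" "0 \<le> th"
  shows "0 \<le> hat_theta sig th"
  using assms by (simp add: hat_theta_def)

lemma tau_param_lt_one: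
  assumes "0 \<le> th" "0 \<le> hat_theta sig th" "0 < eta * L"
  shows "tau_param sig th eta L < 1"
proof -
  define a where "a = 2 * th + eta * L / 2"
  define S where "S = sqrt (a\<^sup>2 - 4 * th * (th - hat_theta sig th))"
  have "4 * th * (th - hat_theta sig th) \<le> (2 * th)\<^sup>2"
    using assms by (simp add: power2_eq_square algebra_simps)
  also have "\<dots> \<le> a\<^sup>2"
    using assms by (intro power_mono) (auto simp: a_def)
  finally have "0 \<le> S"
    by (simp add: S_def)
  moreover have "2 * (th - hat_theta sig th) < a" "0 < a"
    using assms by (auto simp: a_def)
  ultimately have "2 * (th - hat_theta sig th) / (a + S) < 1"
    by (subst divide_less_eq_1_pos) linarith+
  then show ?thesis
    unfolding tau_param_def a_def S_def .
qed

lemma alg2_run_y_step: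
  assumes "alg2_run C F F' L sig th eta x y nu lam"
  shows "y (Suc k) = y k \<and> nu (Suc k) = nu k
    \<or> nu (Suc k) \<in> normal_cone C (y (Suc k))
      \<and> norm (lam (Suc k) *\<^sub>R (linearization F F' (y k) (y (Suc k)) + nu (Suc k)) + y (Suc k) - x k)
        \<le> sig * norm (y (Suc k) - y k)"
  using assms unfolding alg2_run_def by (metis (full_types))

lemma alg2_run_lam_step:
  assumes "alg2_run C F F' L sig th eta x y nu lam"
  shows "lam (Suc (Suc k)) = (1 - tau_param sig th eta L) * lam (Suc k)
    \<or> lam (Suc (Suc k)) = lam (Suc k) / (1 - tau_param sig th eta L)"
  using assms unfolding alg2_run_def by (metis (full_types))

lemma alg2_run_normal_cone:
  assumes run: "alg2_run C F F' L sig th eta x y nu lam"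
  shows "nu k \<in> normal_cone C (y k)"
proof (induction k)
  case 0
  then show ?case
    using run by (simp add: alg2_run_def zero_in_normal_cone)
next
  case (Suc k)
  then show ?case
    using alg2_run_y_step[OF run, of k] by auto
qed

lemma alg2_run_lam_pos:
  assumes run: "alg2_run C F F' L sig th eta x y nu lam"
    and tau: "tau_param sig th eta L < 1"
  shows "0 < lam (Suc k)"
proof (induction k)
  case 0
  then show ?case
    using run by (simp add: alg2_run_def)
next
  case (Suc k)
  then show ?case
    using alg2_run_lam_step[OF run, of k] tau by auto
qed

theorem proposition4p1:
  fixes C :: "'a::{real_inner, complete_space} set"
    and F :: "'a \<Rightarrow> 'a" and F' :: "'a \<Rightarrow> 'a \<Rightarrow>\<^sub>L 'a"
    and L sig th eta :: real
    and x y nu :: "nat \<Rightarrow> 'a" and lam :: "nat \<Rightarrow> real"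
  assumes C_ne: "C \<noteq> {}" and C_closed: "closed C" and C_convex: "convex C"
    and F_mono: "\<forall>u\<in>C. \<forall>v\<in>C. inner (F u - F v) (u - v) \<ge> 0"
    and F_deriv: "\<forall>u\<in>C. (F has_derivative blinfun_apply (F' u)) (at u within C)"
    and F'_cont: "continuous_on C F'"
    and L_pos: "L > 0"
    and F'_lip: "\<forall>u\<in>C. \<forall>v\<in>C. norm (F' u - F' v) \<le> L * norm (u - v)"
    and sol_ne: "\<exists>u\<in>C. - F u \<in> normal_cone C u"
    and sig: "0 \<le> sig" "sig < 1/2"
    and th: "0 < th" "th < (1 - sig) * (1 - 2 * sig)"
    and eta: "eta > 2 * hat_theta sig th / L"
    and run: "alg2_run C F F' L sig th eta x y nu lam"
  shows "\<forall>k. norm (y (Suc k) - y k)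
           \<le> 1 / (1 - sig) * norm (lam (Suc k) *\<^sub>R (F (y k) + nu k) + y k - x k)"
proof
  fix k
  have "0 \<le> hat_theta sig th"
    using sig th by (intro hat_theta_nonneg) auto
  moreover have "0 < eta * L"
    using eta L_pos calculation by (simp add: field_simps)
  ultimately have lam_pos: "0 < lam (Suc k)"
    using alg2_run_lam_pos[OF run tau_param_lt_one] th by simp
  have nu: "nu k \<in> normal_cone C (y k)" "nu (Suc k) \<in> normal_cone C (y (Suc k))"
    using alg2_run_normal_cone[OF run] by blast+
  then have "(F has_derivative blinfun_apply (F' (y k))) (at (y k) within C)"
    using F_deriv normal_cone_in_set by blast
  note newton_step = inexact_newton_step_norm_le[where F' = F' and y = "y k",
    OF C_convex F_mono this nu, of "lam (Suc k)"]
  from alg2_run_y_step[OF run, of k] show "norm (y (Suc k) - y k)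
      \<le> 1 / (1 - sig) * norm (lam (Suc k) *\<^sub>R (F (y k) + nu k) + y k - x k)"
    using newton_step lam_pos sig by auto
qed

end
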